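(* Let $0<u<v<1$. Suppose $\mathcal E^c_u(z)=\mathcal E^c_v(z)=\mathcal E_u(z)$ for some $z\in\mathbb R$. Then $\mathcal E^c_u=\mathcal E^c_v$ on $(-\infty,z]$.
   Context: Let $\mu,\nu$ be probability measures on $\mathbb R$ with finite first moments and $\mu\le_{cx}\nu$. Put $P_\eta(k)=\int(k-x)^+\eta(dx)$. Let $G$ be any quantile function of $\mu$. For $u\in(0,1)$ let $\mu_u(A)=\mu(A\cap(-\infty,G(u)))+\big(u-\mu((-\infty,G(u)))\big)\delta_{G(u)}(A)$ and $\mathcal E_u=P_\nu-P_{\mu_u}$. $f^c$ denotes the largest convex function lying below $f$. *)

theory Defs
  imports "HOL-Probability.Probability"
begin

definition cx_le :: "real measure \<Rightarrow> real measure \<Rightarrow> bool" where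
  "cx_le mu nu \<longleftrightarrow>
     (\<forall>\<phi>::real \<Rightarrow> real. convex_on UNIV \<phi> \<longrightarrow> integrable mu \<phi> \<longrightarrow> integrable nu \<phi> \<longrightarrow>
        integral\<^sup>L mu \<phi> \<le> integral\<^sup>L nu \<phi>)"

definition put_fun :: "real measure \<Rightarrow> real \<Rightarrow> real" where
  "put_fun eta k = integral\<^sup>L eta (\<lambda>x. max (k - x) 0)"

definition is_quantile :: "real measure \<Rightarrow> (real \<Rightarrow> real) \<Rightarrow> bool" where
  "is_quantile mu G \<longleftrightarrow>
     (\<forall>u\<in>{0<..<1}. measure mu {..<G u} \<le> u \<and> u \<le> measure mu {..G u})"

text \<open>P_{mu_u}(k), where mu_u = mu restricted to (-inf, G u) plus an atom of mass
  u - mu((-inf,G u)) at G u; the integral against mu_u written out.\<close>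
definition put_fun_trunc :: "real measure \<Rightarrow> (real \<Rightarrow> real) \<Rightarrow> real \<Rightarrow> real \<Rightarrow> real" where
  "put_fun_trunc mu G u k =
     (LINT x:{..<G u}|mu. max (k - x) 0) + (u - measure mu {..<G u}) * max (k - G u) 0"

definition E_fun :: "real measure \<Rightarrow> real measure \<Rightarrow> (real \<Rightarrow> real) \<Rightarrow> real \<Rightarrow> real \<Rightarrow> real" where
  "E_fun mu nu G u k = put_fun nu k - put_fun_trunc mu G u k"

definition convex_hull_fun :: "(real \<Rightarrow> real) \<Rightarrow> real \<Rightarrow> real" where
  "convex_hull_fun f x = Sup {g x | g. convex_on UNIV g \<and> (\<forall>y. g y \<le> f y)}"

end

theory Submission
  imports Defs
begin

text \<open>
  E_u - E_v = P_{mu_v} - P_{mu_u} is the put function of the nonnegative measure mu_v - mu_u,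
  hence nonnegative and nondecreasing. So E_v <= E_u, and E_u(z) = E_v^c(z) <= E_v(z) <= E_u(z)
  forces E_u = E_v on (-inf, z]. Then E_v^c <= E_u^c by monotonicity of the hull. Conversely, a
  convex minorant of E_u, lowered by eps and glued on (-inf, z] to a convex minorant of E_v that
  is eps-close to E_u(z) at z, is a convex minorant of E_v.
\<close>

lemma convex_on_max:
  fixes f g :: "'a::real_vector \<Rightarrow> real"
  assumes "convex_on A f" "convex_on A g"
  shows "convex_on A (\<lambda>x. max (f x) (g x))"
proof (rule convex_onI)
  fix t :: real and x y assume t: "0 < t" "t < 1" and xy: "x \<in> A" "y \<in> A"
  have "f ((1 - t) *\<^sub>R x + t *\<^sub>R y) \<le> (1 - t) * max (f x) (g x) + t * max (f y) (g y)"
    using convex_onD[OF assms(1), of t x y] t xy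
    by (smt (verit) mult_left_mono max.cobounded1)
  moreover have "g ((1 - t) *\<^sub>R x + t *\<^sub>R y) \<le> (1 - t) * max (f x) (g x) + t * max (f y) (g y)"
    using convex_onD[OF assms(2), of t x y] t xy
    by (smt (verit) mult_left_mono max.cobounded2)
  ultimately show "max (f ((1 - t) *\<^sub>R x + t *\<^sub>R y)) (g ((1 - t) *\<^sub>R x + t *\<^sub>R y))
      \<le> (1 - t) * max (f x) (g x) + t * max (f y) (g y)"
    by simp
qed (use convex_on_imp_convex assms in blast)

lemma convex_le_affine_between:
  fixes f :: "real \<Rightarrow> real"
  assumes "convex_on UNIV f" "a \<le> m" "m \<le> b" "f a \<le> c + s * a" "f b \<le> c + s * b"
  shows "f m \<le> c + s * m"
proof -
  have "convex_on UNIV (\<lambda>x. f x - (c + s * x))"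
    by (intro convex_on_diff assms(1) concave_on_add concave_on_const[THEN iffD2]
        concave_on_linorderI) (auto simp: algebra_simps)
  then have "f m - (c + s * m) \<le> max (f a - (c + s * a)) (f b - (c + s * b))"
    using assms(2,3) by (intro convex_on_le_max[where f = "\<lambda>x. f x - (c + s * x)"])
      (auto intro: convex_on_subset)
  then show ?thesis using assms(4,5) by linarith
qed

lemma convex_on_glue:
  fixes \<phi> \<psi> :: "real \<Rightarrow> real"
  assumes "convex_on UNIV \<phi>" "convex_on UNIV \<psi>" "\<psi> z \<le> \<phi> z"
  shows "convex_on UNIV (\<lambda>y. if y \<le> z then max (\<psi> y) (\<phi> y) else \<phi> y)"
proof -
  define h where "h y = (if y \<le> z then max (\<psi> y) (\<phi> y) else \<phi> y)" for y
  have "convex_on UNIV h"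
  proof (rule convex_on_linorderI)
    fix t x y :: real assume t: "0 < t" "t < 1" and xy: "x < y"
    define m where "m = (1 - t) * x + t * y"
    define s where "s = (h y - h x) / (y - x)"
    define c where "c = h x - s * x"
    have "s * (y - x) = h y - h x"
      using xy unfolding s_def by simp
    then have chord: "h x = c + s * x" "h y = c + s * y"
      unfolding c_def by (simp_all add: algebra_simps)
    have m: "x \<le> m" "m \<le> y"
      using t xy mult_left_mono[of x y t] mult_left_mono[of x y "1 - t"]
      by (auto simp: m_def algebra_simps)
    have \<phi>_below: "\<phi> w \<le> c + s * w" if "x \<le> w" "w \<le> y" for w
      using convex_le_affine_between[OF assms(1) that] chord by (auto simp: h_def split: if_splits)
    have "h m \<le> c + s * m"
      \<comment> \<open>both pieces lie below the chord \<open>c + s * w\<close> of \<open>h\<close>; for \<open>\<psi>\<close> check this at \<open>x\<close> and \<open>min y z\<close>\<close>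
    proof (cases "m \<le> z")
      case True
      have "\<psi> (min y z) \<le> c + s * min y z"
        using chord \<phi>_below[of z] assms(3) True m by (cases "y \<le> z") (auto simp: h_def)
      then have "\<psi> m \<le> c + s * m"
        using convex_le_affine_between[OF assms(2), of x m "min y z"] True m chord
        by (auto simp: h_def split: if_splits)
      then show ?thesis using \<phi>_below m True by (simp add: h_def)
    qed (use \<phi>_below m in \<open>simp add: h_def\<close>)
    also have "c + s * m = (1 - t) * h x + t * h y"
      unfolding chord by (simp add: m_def algebra_simps)
    finally show "h ((1 - t) *\<^sub>R x + t *\<^sub>R y) \<le> (1 - t) * h x + t * h y"
      by (simp add: m_def)
  qed simp
  then show ?thesis by (simp add: h_def[abs_def])
qed

definition convex_minorant :: "(real \<Rightarrow> real) \<Rightarrow> (real \<Rightarrow> real) \<Rightarrow> bool" where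
  "convex_minorant g f \<longleftrightarrow> convex_on UNIV g \<and> (\<forall>y. g y \<le> f y)"

lemma convex_hull_fun_eq_Sup: "convex_hull_fun f x = Sup {g x | g. convex_minorant g f}"
  by (simp add: convex_hull_fun_def convex_minorant_def)

lemma convex_minorant_le_hull:
  assumes "convex_minorant g f"
  shows "g x \<le> convex_hull_fun f x"
  unfolding convex_hull_fun_eq_Sup
  by (rule cSup_upper) (use assms in \<open>auto simp: convex_minorant_def intro!: bdd_aboveI[of _ "f x"]\<close>)

lemma convex_hull_fun_least:
  assumes "convex_minorant g0 f" "\<And>g. convex_minorant g f \<Longrightarrow> g x \<le> c"
  shows "convex_hull_fun f x \<le> c"
  unfolding convex_hull_fun_eq_Sup by (rule cSup_least) (use assms in auto)

lemma convex_hull_fun_le: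
  assumes "convex_minorant g f"
  shows "convex_hull_fun f x \<le> f x"
  by (rule convex_hull_fun_least[OF assms]) (simp add: convex_minorant_def)

lemma convex_hull_fun_mono:
  assumes "convex_minorant g f" "\<And>y. f y \<le> f' y"
  shows "convex_hull_fun f x \<le> convex_hull_fun f' x"
proof (rule convex_hull_fun_least[OF assms(1)])
  fix h assume "convex_minorant h f"
  then have "convex_minorant h f'"
    using assms(2) by (auto simp: convex_minorant_def intro: order_trans)
  then show "h x \<le> convex_hull_fun f' x" by (rule convex_minorant_le_hull)
qed

lemma convex_minorant_near_hull:
  assumes "convex_minorant g f" "0 < e"
  obtains h where "convex_minorant h f" "convex_hull_fun f x - e < h x"
proof -
  have "convex_hull_fun f x - e < Sup {g x | g. convex_minorant g f}"
    using assms(2) by (simp add: convex_hull_fun_eq_Sup)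
  then show ?thesis
    using less_cSupD[of "{g x | g. convex_minorant g f}"] assms(1) that by blast
qed

lemma convex_hull_fun_le_left:
  assumes "convex_minorant \<phi> f" "convex_minorant \<psi> g"
    and "\<And>y. y \<le> z \<Longrightarrow> g y \<le> f y" "g z \<le> convex_hull_fun f z" "x \<le> z"
  shows "convex_hull_fun g x \<le> convex_hull_fun f x"
proof (rule convex_hull_fun_least[OF assms(2)])
  fix h assume h: "convex_minorant h g"
  show "h x \<le> convex_hull_fun f x"
  proof (rule field_le_epsilon)
    fix e :: real assume "0 < e"
    then obtain k where k: "convex_minorant k f" and kz: "convex_hull_fun f z - e < k z"
      using convex_minorant_near_hull[OF assms(1)] by blast
    define l where "l y = (if y \<le> z then max (h y - e) (k y) else k y)" for y
    have "convex_on UNIV (\<lambda>y. h y - e)"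
      using h by (auto simp: convex_minorant_def intro!: convex_on_diff concave_on_const[THEN iffD2])
    moreover have "h z - e \<le> k z"
      using h kz assms(4) unfolding convex_minorant_def by (smt (verit))
    ultimately have "convex_on UNIV l"
      unfolding l_def[abs_def] using convex_on_glue k by (auto simp: convex_minorant_def)
    moreover have "l y \<le> f y" for y
      using h k assms(3) \<open>0 < e\<close> unfolding l_def convex_minorant_def
      by (smt (verit))
    ultimately have "l x \<le> convex_hull_fun f x"
      by (intro convex_minorant_le_hull) (simp add: convex_minorant_def)
    then show "h x \<le> convex_hull_fun f x + e"
      using assms(5) by (simp add: l_def)
  qed
qed

lemma convex_put_payoff: "convex_on UNIV (\<lambda>x. max (k - x) (0::real))"
  by (intro convex_on_max convex_on_diff convex_on_const[THEN iffD2] concave_on_ident[THEN iffD2])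
    auto

lemma integrable_put_payoff:
  assumes "finite_measure M" "integrable M (\<lambda>x. x)"
  shows "integrable M (\<lambda>x. max (k - x) (0::real))"
proof -
  interpret finite_measure M by fact
  show ?thesis using assms(2) by (intro integrable_max integrable_diff) auto
qed

lemma set_integrable_put_payoff:
  assumes "finite_measure M" "integrable M (\<lambda>x. x)" "A \<in> sets M"
  shows "set_integrable M A (\<lambda>x. max (k - x) (0::real))"
  unfolding set_integrable_def
  using integrable_mult_indicator[OF assms(3) integrable_put_payoff[OF assms(1,2)]] .

lemma set_integral_put_payoff_singleton:
  assumes "finite_measure M" "sets M = sets borel"
  shows "(LINT x:{c}|M. max (k - x) (0::real)) = measure M {c} * max (k - c) 0"
proof -
  interpret finite_measure M by fact
  have "(LINT x:{c}|M. max (k - x) (0::real)) = (LINT x:{c}|M. max (k - c) (0::real))"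
    by (rule set_lebesgue_integral_cong) (auto simp: assms(2))
  also have "\<dots> = measure M {c} * max (k - c) 0"
    by (subst set_integral_const) (auto simp: assms(2))
  finally show ?thesis .
qed

lemma measure_atMost_eq:
  assumes "finite_measure M" "sets M = sets borel"
  shows "measure M {..c} = measure M {..<c} + measure M {c::real}"
proof -
  interpret finite_measure M by fact
  have "measure M ({..<c} \<union> {c}) = measure M {..<c} + measure M {c}"
    by (rule finite_measure_Union) (auto simp: assms(2))
  then show ?thesis by (simp add: ivl_disj_un_singleton(2)[symmetric])
qed

lemma is_quantile_mono:
  assumes "finite_measure M" "sets M = sets borel" "is_quantile M G" "0 < u" "u < v" "v < 1"
  shows "G u \<le> G v"
proof (rule ccontr)
  interpret finite_measure M by fact
  assume "\<not> G u \<le> G v"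
  then have "measure M {..G v} \<le> measure M {..<G u}"
    by (intro finite_measure_mono) (auto simp: assms(2))
  moreover have "measure M {..<G u} \<le> u" "v \<le> measure M {..G v}"
    using assms(3-6) unfolding is_quantile_def by auto
  ultimately show False using assms(5) by linarith
qed

lemma put_fun_trunc_diff_repr:
  assumes "finite_measure M" "sets M = sets borel" "integrable M (\<lambda>x. x)" "is_quantile M G"
    and "0 < u" "u < v" "v < 1"
  obtains c1 c2 S a b where "0 \<le> c1" "0 \<le> c2" "S \<in> sets M"
    "\<And>k. put_fun_trunc M G v k - put_fun_trunc M G u k
       = c1 * max (k - a) 0 + (LINT x:S|M. max (k - x) 0) + c2 * max (k - b) 0"
proof (cases "G u = G v")
  case True
  show ?thesis
    by (rule that[of "v - u" 0 "{}" "G u"])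
      (use assms True in \<open>auto simp: put_fun_trunc_def algebra_simps set_lebesgue_integral_def\<close>)
next
  case False
  define a b where "a = G u" and "b = G v"
  have "a < b" using False is_quantile_mono[OF assms(1,2,4-7)] by (simp add: a_def b_def)
  have qu: "u \<le> measure M {..a}" and qv: "measure M {..<b} \<le> v"
    using assms(4-7) unfolding is_quantile_def a_def b_def by auto
  have pieces: "{..<b} = {..<a} \<union> ({a} \<union> {a<..<b})"
    using \<open>a < b\<close> by auto
  have "(LINT x:{..<b}|M. max (k - x) 0) = (LINT x:{..<a}|M. max (k - x) 0)
     + measure M {a} * max (k - a) 0 + (LINT x:{a<..<b}|M. max (k - x) (0::real))" for k
  proof -
    have int: "set_integrable M A (\<lambda>x. max (k - x) 0)" if "A \<in> sets borel" for A
      using set_integrable_put_payoff[OF assms(1,3)] that assms(2) by simp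
    have "(LINT x:{..<b}|M. max (k - x) 0) = (LINT x:{..<a}|M. max (k - x) 0)
       + (LINT x:{a} \<union> {a<..<b}|M. max (k - x) (0::real))"
      unfolding pieces by (rule set_integral_Un) (auto intro!: int set_integrable_Un)
    also have "(LINT x:{a} \<union> {a<..<b}|M. max (k - x) (0::real))
        = (LINT x:{a}|M. max (k - x) 0) + (LINT x:{a<..<b}|M. max (k - x) 0)"
      by (rule set_integral_Un) (auto intro!: int)
    finally show ?thesis
      using set_integral_put_payoff_singleton[OF assms(1,2)] by simp
  qed
  then show ?thesis
    using qu qv measure_atMost_eq[OF assms(1,2), of a]
    by (intro that[of "measure M {..a} - u" "v - measure M {..<b}" "{a<..<b}" a b])
      (auto simp: put_fun_trunc_def a_def[symmetric] b_def[symmetric] algebra_simps assms(2))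
qed

lemma put_fun_trunc_diff_nonneg_mono:
  assumes "finite_measure M" "sets M = sets borel" "integrable M (\<lambda>x. x)" "is_quantile M G"
    and "0 < u" "u < v" "v < 1"
  shows "put_fun_trunc M G u k \<le> put_fun_trunc M G v k"
    and "k \<le> k' \<Longrightarrow> put_fun_trunc M G v k - put_fun_trunc M G u k
                     \<le> put_fun_trunc M G v k' - put_fun_trunc M G u k'"
proof -
  obtain c1 c2 S a b where c: "0 \<le> c1" "0 \<le> c2" "S \<in> sets M" and eq: "\<And>k.
      put_fun_trunc M G v k - put_fun_trunc M G u k
      = c1 * max (k - a) 0 + (LINT x:S|M. max (k - x) 0) + c2 * max (k - b) 0"
    using put_fun_trunc_diff_repr[OF assms] by metis
  have "0 \<le> (LINT x:S|M. max (k - x) (0::real))"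
    unfolding set_lebesgue_integral_def
    by (intro integral_nonneg_AE) (auto split: split_indicator)
  then show "put_fun_trunc M G u k \<le> put_fun_trunc M G v k"
    using eq[of k] c by (smt (verit) mult_nonneg_nonneg max.cobounded2)
  assume "k \<le> k'"
  have "(LINT x:S|M. max (k - x) 0) \<le> (LINT x:S|M. max (k' - x) (0::real))"
    using \<open>k \<le> k'\<close> by (intro set_integral_mono set_integrable_put_payoff assms c) auto
  moreover have "c1 * max (k - a) 0 \<le> c1 * max (k' - a) 0" "c2 * max (k - b) 0 \<le> c2 * max (k' - b) 0"
    using c \<open>k \<le> k'\<close> by (auto intro!: mult_left_mono)
  ultimately show "put_fun_trunc M G v k - put_fun_trunc M G u k
      \<le> put_fun_trunc M G v k' - put_fun_trunc M G u k'"
    unfolding eq by linarith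
qed

lemma put_fun_trunc_le_put_fun:
  assumes "finite_measure M" "sets M = sets borel" "integrable M (\<lambda>x. x)" "is_quantile M G"
    and "0 < v" "v < 1"
  shows "put_fun_trunc M G v k \<le> put_fun M k"
proof -
  interpret finite_measure M by fact
  define b where "b = G v"
  have "v \<le> measure M {..b}" using assms(4-6) unfolding is_quantile_def b_def by auto
  then have "put_fun_trunc M G v k
      \<le> (LINT x:{..<b}|M. max (k - x) 0) + measure M {b} * max (k - b) 0"
    unfolding put_fun_trunc_def b_def[symmetric] measure_atMost_eq[OF assms(1,2)]
    by (intro add_left_mono mult_right_mono) auto
  also have "\<dots> = (LINT x:{..<b} \<union> {b}|M. max (k - x) (0::real))"
    by (subst set_integral_Un)
      (auto intro!: set_integrable_put_payoff assms
        simp: assms(2) set_integral_put_payoff_singleton[OF assms(1,2)])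
  also have "\<dots> \<le> put_fun M k"
    unfolding set_lebesgue_integral_def put_fun_def
    by (intro integral_mono integrable_mult_indicator integrable_put_payoff assms)
      (auto simp: assms(2) split: split_indicator)
  finally show ?thesis .
qed

lemma put_fun_le_if_cx_le:
  assumes "cx_le M N" "finite_measure M" "finite_measure N"
    and "integrable M (\<lambda>x. x)" "integrable N (\<lambda>x. x)"
  shows "put_fun M k \<le> put_fun N k"
  unfolding put_fun_def
  using assms(1)[unfolded cx_le_def, rule_format, OF convex_put_payoff
      integrable_put_payoff[OF assms(2,4)] integrable_put_payoff[OF assms(3,5)]] .

lemma E_fun_nonneg:
  assumes "cx_le M N" "finite_measure M" "finite_measure N" "sets M = sets borel"
    and "integrable M (\<lambda>x. x)" "integrable N (\<lambda>x. x)" "is_quantile M G" "0 < v" "v < 1"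
  shows "0 \<le> E_fun M N G v k"
  using put_fun_trunc_le_put_fun[OF assms(2,4,5,7-9), of k] put_fun_le_if_cx_le[OF assms(1-3,5,6), of k]
  by (simp add: E_fun_def)

theorem lemma4p5:
  fixes mu nu :: "real measure" and G :: "real \<Rightarrow> real" and u v z :: real
  assumes "prob_space mu" and "prob_space nu"
    and "sets mu = sets borel" and "sets nu = sets borel"
    and "integrable mu (\<lambda>x. x)" and "integrable nu (\<lambda>x. x)"
    and "cx_le mu nu"
    and "is_quantile mu G"
    and "0 < u" and "u < v" and "v < 1"
    and "convex_hull_fun (E_fun mu nu G u) z = E_fun mu nu G u z"
    and "convex_hull_fun (E_fun mu nu G v) z = E_fun mu nu G u z"
  shows "\<forall>x\<le>z. convex_hull_fun (E_fun mu nu G u) x = convex_hull_fun (E_fun mu nu G v) x"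
proof -
  define Eu Ev where "Eu = E_fun mu nu G u" and "Ev = E_fun mu nu G v"
  note fin = prob_space.finite_measure[OF assms(1)] prob_space.finite_measure[OF assms(2)]
  have gap: "Eu k - Ev k = put_fun_trunc mu G v k - put_fun_trunc mu G u k" for k
    by (simp add: Eu_def Ev_def E_fun_def)
  note gap_props = put_fun_trunc_diff_nonneg_mono[OF fin(1) assms(3,5,8-11)]
  have "0 \<le> Ev k" for k
    unfolding Ev_def by (rule E_fun_nonneg[OF assms(7) fin assms(3,5,6,8) _ assms(11)]) (use assms(9,10) in linarith)
  moreover have Ev_le_Eu: "Ev k \<le> Eu k" for k
    using gap[of k] gap_props(1)[of k] by simp
  ultimately have minorants: "convex_minorant (\<lambda>_. 0) Ev" "convex_minorant (\<lambda>_. 0) Eu"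
    by (auto simp: convex_minorant_def convex_on_const intro: order_trans)
  have "Eu z = convex_hull_fun Ev z"
    using assms(13) by (simp add: Eu_def Ev_def)
  also have "\<dots> \<le> Ev z"
    by (rule convex_hull_fun_le[OF minorants(1)])
  finally have agree: "Eu y \<le> Ev y" if "y \<le> z" for y
    using gap[of y] gap[of z] gap_props(2)[OF that] by linarith
  show ?thesis
  proof (intro allI impI)
    fix x assume "x \<le> z"
    have "convex_hull_fun Eu x \<le> convex_hull_fun Ev x"
      using convex_hull_fun_le_left[OF minorants agree _ \<open>x \<le> z\<close>] assms(13)
      by (simp add: Eu_def Ev_def)
    moreover have "convex_hull_fun Ev x \<le> convex_hull_fun Eu x"
      by (rule convex_hull_fun_mono[OF minorants(1) Ev_le_Eu])
    ultimately show "convex_hull_fun (E_fun mu nu G u) x = convex_hull_fun (E_fun mu nu G v) x"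
      by (simp add: Eu_def Ev_def)
  qed
qed

end
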